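(* Suppose $\rho,\sigma\in\mathbb{C}^{d\times d}$ are quantum states with $D_H^2(\rho\|\sigma)\le\varepsilon$, where $0 < \varepsilon \le 2$. Then for $\sigma' = \Delta_{\varepsilon/2}(\sigma)$ we have $D_{KL}(\rho\|\sigma') \le 4\varepsilon\,(2 + \ln(2d/\varepsilon))$.
   Context: $D_H^2(\rho\|\sigma) = \mathrm{tr}((\sqrt\rho-\sqrt\sigma)^2)$. For $0\le\epsilon\le1$, $\Delta_\epsilon(\sigma) = (1-\epsilon)\sigma + \epsilon I/d$. $D_{KL}(\rho\|\sigma)=\mathrm{tr}(\rho(\ln\rho-\ln\sigma))$. *)

theory Defs
  imports Complex_Main "Jordan_Normal_Form.Matrix"
begin

definition ctrace :: "complex mat \<Rightarrow> complex" where
  "ctrace A = (\<Sum>i<dim_row A. A $$ (i,i))"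

definition cadj :: "complex mat \<Rightarrow> complex mat" where
  "cadj A = mat (dim_col A) (dim_row A) (\<lambda>(i,j). cnj (A $$ (j,i)))"

definition unitary_mat :: "nat \<Rightarrow> complex mat \<Rightarrow> bool" where
  "unitary_mat d U \<longleftrightarrow> U \<in> carrier_mat d d \<and> U * cadj U = 1\<^sub>m d \<and> cadj U * U = 1\<^sub>m d"

definition hermitian_mat :: "nat \<Rightarrow> complex mat \<Rightarrow> bool" where
  "hermitian_mat d A \<longleftrightarrow> A \<in> carrier_mat d d \<and> cadj A = A"

definition rdiag :: "nat \<Rightarrow> (nat \<Rightarrow> real) \<Rightarrow> complex mat" where
  "rdiag d l = mat d d (\<lambda>(i,j). if i = j then complex_of_real (l i) else 0)"

definition psd_mat :: "nat \<Rightarrow> complex mat \<Rightarrow> bool" where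
  "psd_mat d A \<longleftrightarrow> hermitian_mat d A \<and>
     (\<forall>v \<in> carrier_vec d. 0 \<le> Re (conjugate v \<bullet> (A *\<^sub>v v)))"

definition quantum_state :: "nat \<Rightarrow> complex mat \<Rightarrow> bool" where
  "quantum_state d \<rho> \<longleftrightarrow> psd_mat d \<rho> \<and> ctrace \<rho> = 1"

text \<open>Functional calculus for Hermitian matrices via a spectral decomposition
  A = U diag(l) U^*; the result is independent of the chosen decomposition.\<close>
definition mat_fun :: "nat \<Rightarrow> (real \<Rightarrow> real) \<Rightarrow> complex mat \<Rightarrow> complex mat" where
  "mat_fun d f A = (SOME B. \<exists>U l. unitary_mat d U \<and> A = U * rdiag d l * cadj U \<and>
                              B = U * rdiag d (f \<circ> l) * cadj U)"

definition msqrt :: "nat \<Rightarrow> complex mat \<Rightarrow> complex mat" where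
  "msqrt d A = mat_fun d sqrt A"

text \<open>Matrix logarithm; on zero eigenvalues Isabelle's ln 0 = 0, which realises the
  usual convention 0 ln 0 = 0 inside tr(rho ln rho).\<close>
definition mln :: "nat \<Rightarrow> complex mat \<Rightarrow> complex mat" where
  "mln d A = mat_fun d ln A"

definition hellinger_sq :: "nat \<Rightarrow> complex mat \<Rightarrow> complex mat \<Rightarrow> real" where
  "hellinger_sq d \<rho> \<sigma> = Re (ctrace ((msqrt d \<rho> - msqrt d \<sigma>) * (msqrt d \<rho> - msqrt d \<sigma>)))"

definition depolarize :: "nat \<Rightarrow> real \<Rightarrow> complex mat \<Rightarrow> complex mat" where
  "depolarize d \<epsilon> \<sigma> = complex_of_real (1 - \<epsilon>) \<cdot>\<^sub>m \<sigma> + complex_of_real (\<epsilon> / real d) \<cdot>\<^sub>m 1\<^sub>m d"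

definition rel_entropy :: "nat \<Rightarrow> complex mat \<Rightarrow> complex mat \<Rightarrow> real" where
  "rel_entropy d \<rho> \<sigma> = Re (ctrace (\<rho> * (mln d \<rho> - mln d \<sigma>)))"

end

theory Submission
  imports Defs "Jordan_Normal_Form.Char_Poly"
begin

(*
  Diagonalise rho = U diag(p) U^* and sigma = V diag(s) V^*. The depolarised state sigma' has the
  eigenvectors of sigma and eigenvalues q_j = (1 - eps/2) s_j + eps/(2d) >= eps/(2d). In these
  bases both quantities become averages over the doubly stochastic weights w_ij = |<u_i|v_j>|^2:

    D_H^2(rho||sigma) = sum_ij w_ij (sqrt p_i - sqrt s_j)^2,
    D_KL(rho||sigma') = sum_ij w_ij p_i (ln p_i - ln q_j).

  As p_i <= 1 <= M q_j for M = 2d/eps, the scalar inequality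
  P ln(P/Q) <= P - Q + (2 + ln M) (sqrt P - sqrt Q)^2 applies termwise. The linear terms average
  to zero, and sum_ij w_ij (sqrt p_i - sqrt q_j)^2 <= 2 D_H^2 + 2 sum_j |s_j - q_j| <= 4 eps.
*)

lemma complex_mult_cnj_cmod: "z * cnj z = complex_of_real ((cmod z)\<^sup>2)"
  by (simp add: complex_mult_cnj cmod_power2)

lemma dim_cadj [simp]: "dim_row (cadj A) = dim_col A" "dim_col (cadj A) = dim_row A"
  by (auto simp: cadj_def)

lemma cadj_carrier_mat [simp]: "A \<in> carrier_mat n m \<Longrightarrow> cadj A \<in> carrier_mat m n"
  by (auto simp: cadj_def)

lemma index_cadj [simp]:
  "i < dim_col A \<Longrightarrow> j < dim_row A \<Longrightarrow> cadj A $$ (i,j) = cnj (A $$ (j,i))"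
  by (auto simp: cadj_def)

lemma cadj_cadj [simp]: "cadj (cadj A) = A"
  by (rule eq_matI) auto

lemma cadj_one [simp]: "cadj (1\<^sub>m n) = 1\<^sub>m n"
  by (rule eq_matI) auto

lemma cadj_mult:
  assumes "A \<in> carrier_mat n m" "B \<in> carrier_mat m k"
  shows "cadj (A * B) = cadj B * cadj A"
  using assms by (intro eq_matI) (auto simp: scalar_prod_def mult.commute intro!: sum.cong)

lemma ctrace_minus:
  "A \<in> carrier_mat n n \<Longrightarrow> B \<in> carrier_mat n n \<Longrightarrow> ctrace (A - B) = ctrace A - ctrace B"
  by (simp add: ctrace_def sum_subtractf)

lemma ctrace_comm:
  assumes "A \<in> carrier_mat n m" "B \<in> carrier_mat m n"
  shows "ctrace (A * B) = ctrace (B * A)"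
proof -
  have "ctrace (A * B) = (\<Sum>i<n. \<Sum>k<m. A $$ (i,k) * B $$ (k,i))"
    using assms by (auto simp: ctrace_def scalar_prod_def atLeast0LessThan intro!: sum.cong)
  also have "\<dots> = (\<Sum>k<m. \<Sum>i<n. B $$ (k,i) * A $$ (i,k))"
    by (subst sum.swap) (simp add: mult.commute)
  also have "\<dots> = ctrace (B * A)"
    using assms by (auto simp: ctrace_def scalar_prod_def atLeast0LessThan intro!: sum.cong)
  finally show ?thesis .
qed

lemma rdiag_carrier_mat [simp]: "rdiag n a \<in> carrier_mat n n"
  by (simp add: rdiag_def)

lemma dim_rdiag [simp]: "dim_row (rdiag n a) = n" "dim_col (rdiag n a) = n"
  by (auto simp: rdiag_def)

lemma index_rdiag [simp]:
  "i < n \<Longrightarrow> j < n \<Longrightarrow> rdiag n a $$ (i,j) = (if i = j then complex_of_real (a i) else 0)"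
  by (simp add: rdiag_def)

lemma index_rdiag_mult:
  assumes "M \<in> carrier_mat n m" "i < n" "j < m"
  shows "(rdiag n a * M) $$ (i,j) = a i * M $$ (i,j)"
  using assms by (simp add: scalar_prod_def if_distrib[of "\<lambda>x. x * _"] cong: if_cong)

lemma index_mult_rdiag:
  assumes "M \<in> carrier_mat m n" "i < m" "j < n"
  shows "(M * rdiag n a) $$ (i,j) = M $$ (i,j) * a j"
  using assms by (simp add: scalar_prod_def if_distrib[of "\<lambda>x. _ * x"] cong: if_cong)

lemma rdiag_mult_rdiag: "rdiag n a * rdiag n b = rdiag n (\<lambda>i. a i * b i)"
  by (rule eq_matI) (auto simp: index_rdiag_mult[of "rdiag n b" n n] simp del: index_mult_mat(1))

lemma ctrace_rdiag: "ctrace (rdiag n a) = of_real (\<Sum>i<n. a i)"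
  by (simp add: ctrace_def)

lemma unitary_matD:
  assumes "unitary_mat d U"
  shows "U \<in> carrier_mat d d" "cadj U \<in> carrier_mat d d"
    "U * cadj U = 1\<^sub>m d" "cadj U * U = 1\<^sub>m d"
  using assms by (auto simp: unitary_mat_def)

lemma unitary_one_mat: "unitary_mat d (1\<^sub>m d)"
  by (simp add: unitary_mat_def)

lemma unitary_cadj: "unitary_mat d U \<Longrightarrow> unitary_mat d (cadj U)"
  by (auto simp: unitary_mat_def)

lemma unitary_cancel:
  assumes "unitary_mat d U" "X \<in> carrier_mat d d"
  shows "cadj U * (U * X) = X" "U * (cadj U * X) = X"
  using unitary_matD[OF assms(1)] assms(2)
  by (simp_all flip: assoc_mult_mat[of _ d d _ d _ d])

lemma unitary_mult:
  assumes "unitary_mat d U" "unitary_mat d V"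
  shows "unitary_mat d (U * V)"
  using unitary_matD[OF assms(1)] unitary_matD[OF assms(2)] unitary_cancel[OF assms(1)]
    unitary_cancel[OF assms(2)]
  by (simp add: unitary_mat_def cadj_mult[of _ d d _ d] assoc_mult_mat[of _ d d _ d _ d]
      mult_carrier_mat[of _ d d _ d])

lemma unitary_row_norm:
  assumes "unitary_mat d W" "i < d"
  shows "(\<Sum>j<d. (cmod (W $$ (i,j)))\<^sup>2) = 1"
proof -
  note W = unitary_matD[OF assms(1)]
  have "complex_of_real (\<Sum>j<d. (cmod (W $$ (i,j)))\<^sup>2) = (W * cadj W) $$ (i,i)"
    using W(1) assms(2) by (auto simp: scalar_prod_def atLeast0LessThan complex_mult_cnj_cmod)
  also have "\<dots> = 1"
    using W(3) assms(2) by simp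
  finally show ?thesis
    by (simp only: of_real_eq_1_iff)
qed

lemma udiag_mult_udiag:
  assumes "unitary_mat d U"
  shows "(U * rdiag d a * cadj U) * (U * rdiag d b * cadj U) = U * rdiag d (\<lambda>i. a i * b i) * cadj U"
proof -
  have U: "U \<in> carrier_mat d d" "cadj U \<in> carrier_mat d d"
    using unitary_matD[OF assms] by auto
  have "rdiag d a * (rdiag d b * cadj U) = rdiag d (\<lambda>i. a i * b i) * cadj U"
    using U by (simp add: rdiag_mult_rdiag flip: assoc_mult_mat[of _ d d _ d _ d])
  then show ?thesis
    using U unitary_cancel[OF assms]
    by (simp add: assoc_mult_mat[of _ d d _ d _ d] mult_carrier_mat[of _ d d _ d])
qed

lemma ctrace_udiag:
  assumes "unitary_mat d U"
  shows "ctrace (U * rdiag d a * cadj U) = of_real (\<Sum>i<d. a i)"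
proof -
  note U = unitary_matD[OF assms]
  have "ctrace (U * rdiag d a * cadj U) = ctrace (U * (rdiag d a * cadj U))"
    using U by (simp add: assoc_mult_mat[of _ d d _ d _ d])
  also have "\<dots> = ctrace (rdiag d a * cadj U * U)"
    by (rule ctrace_comm[of _ d d]) (use U in auto)
  also have "\<dots> = ctrace (rdiag d a)"
    using U by (simp add: assoc_mult_mat[of _ d d _ d _ d])
  finally show ?thesis
    by (simp add: ctrace_rdiag)
qed

lemma rdiag_intertwine_fun:
  assumes W: "W \<in> carrier_mat d d" and comm: "rdiag d l' * W = W * rdiag d l"
  shows "rdiag d (f \<circ> l') * W = W * rdiag d (f \<circ> l)"
proof (rule eq_matI)
  fix i j assume "i < dim_row (W * rdiag d (f \<circ> l))" "j < dim_col (W * rdiag d (f \<circ> l))"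
  then have i: "i < d" and j: "j < d"
    using W by auto
  have "l' i * W $$ (i,j) = W $$ (i,j) * l j"
    using arg_cong[OF comm, of "\<lambda>M. M $$ (i,j)"] W i j
    by (simp add: index_rdiag_mult[of W d d] index_mult_rdiag[of W d d] del: index_mult_mat(1))
  then have "f (l' i) * W $$ (i,j) = W $$ (i,j) * f (l j)"
    by (cases "W $$ (i,j) = 0") (auto simp: mult.commute)
  then show "(rdiag d (f \<circ> l') * W) $$ (i,j) = (W * rdiag d (f \<circ> l)) $$ (i,j)"
    using W i j
    by (simp add: index_rdiag_mult[of W d d] index_mult_rdiag[of W d d] del: index_mult_mat(1))
qed (use W in auto)

lemma mat_fun_udiag:
  assumes U: "unitary_mat d U" and A: "A = U * rdiag d l * cadj U"
  shows "mat_fun d f A = U * rdiag d (f \<circ> l) * cadj U"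
proof -
  have "\<exists>B U l. unitary_mat d U \<and> A = U * rdiag d l * cadj U \<and> B = U * rdiag d (f \<circ> l) * cadj U"
    using U A by blast
  from someI_ex[OF this] obtain U' l' where U': "unitary_mat d U'"
    and A': "A = U' * rdiag d l' * cadj U'" and fA: "mat_fun d f A = U' * rdiag d (f \<circ> l') * cadj U'"
    unfolding mat_fun_def by blast
  note u = unitary_matD[OF U] and u' = unitary_matD[OF U']
  note assoc = assoc_mult_mat[of _ d d _ d _ d] and carrier = mult_carrier_mat[of _ d d _ d]
  define W where "W = cadj U' * U"
  have W: "W \<in> carrier_mat d d"
    using u u' by (simp add: W_def carrier)
  have "rdiag d l' * W = cadj U' * A * U"
    using u u' unfolding A' W_def by (simp add: assoc carrier unitary_cancel[OF U'])
  also have "\<dots> = W * rdiag d l"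
    using u u' unfolding A W_def by (simp add: assoc carrier unitary_cancel[OF U])
  finally have "rdiag d (f \<circ> l') * W = W * rdiag d (f \<circ> l)"
    by (rule rdiag_intertwine_fun[OF W])
  then have "U' * (rdiag d (f \<circ> l') * W) * cadj U = U' * (W * rdiag d (f \<circ> l)) * cadj U"
    by simp
  then show ?thesis
    using u u' unfolding fA W_def
    by (simp add: assoc carrier unitary_cancel[OF U] unitary_cancel[OF U'])
qed

section \<open>Doubly stochastic overlaps of two eigenbases\<close>

definition prob_vector :: "nat \<Rightarrow> (nat \<Rightarrow> real) \<Rightarrow> bool" where
  "prob_vector d p \<longleftrightarrow> (\<forall>i<d. 0 \<le> p i) \<and> (\<Sum>i<d. p i) = 1"

lemma prob_vector_dim_pos: "prob_vector d p \<Longrightarrow> 0 < d"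
  by (cases d) (auto simp: prob_vector_def)

definition doubly_stochastic :: "nat \<Rightarrow> (nat \<Rightarrow> nat \<Rightarrow> real) \<Rightarrow> bool" where
  "doubly_stochastic d w \<longleftrightarrow> (\<forall>i<d. \<forall>j<d. 0 \<le> w i j) \<and>
     (\<forall>i<d. (\<Sum>j<d. w i j) = 1) \<and> (\<forall>j<d. (\<Sum>i<d. w i j) = 1)"

lemma doubly_stochastic_sum_rows:
  assumes "doubly_stochastic d w"
  shows "(\<Sum>i<d. \<Sum>j<d. w i j * f i) = (\<Sum>i<d. f i)"
  using assms by (simp add: doubly_stochastic_def flip: sum_distrib_right)

lemma doubly_stochastic_sum_cols:
  assumes "doubly_stochastic d w"
  shows "(\<Sum>i<d. \<Sum>j<d. w i j * g j) = (\<Sum>j<d. g j)"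
  using assms by (subst sum.swap) (simp add: doubly_stochastic_def flip: sum_distrib_right)

(* |<u_i|v_j>|^2 for the columns u_i of U and v_j of V *)
definition basis_overlap :: "complex mat \<Rightarrow> complex mat \<Rightarrow> nat \<Rightarrow> nat \<Rightarrow> real" where
  "basis_overlap U V i j = (cmod ((cadj U * V) $$ (i,j)))\<^sup>2"

lemma doubly_stochastic_basis_overlap:
  assumes "unitary_mat d U" "unitary_mat d V"
  shows "doubly_stochastic d (basis_overlap U V)"
proof -
  define W where "W = cadj U * V"
  have W: "unitary_mat d W"
    unfolding W_def by (intro unitary_mult unitary_cadj assms)
  then have "dim_row W = d" "dim_col W = d"
    using unitary_matD(1) by blast+
  then have "(\<Sum>i<d. (cmod (W $$ (i,j)))\<^sup>2) = 1" if "j < d" for j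
    using unitary_row_norm[OF unitary_cadj[OF W] that] that by simp
  then show ?thesis
    using unitary_row_norm[OF W] by (simp add: doubly_stochastic_def basis_overlap_def flip: W_def)
qed

lemma ctrace_udiag_mult_udiag:
  assumes "unitary_mat d U" "unitary_mat d V"
  shows "ctrace ((U * rdiag d a * cadj U) * (V * rdiag d b * cadj V)) =
    of_real (\<Sum>i<d. \<Sum>j<d. a i * b j * basis_overlap U V i j)"
proof -
  note U = unitary_matD[OF assms(1)] and V = unitary_matD[OF assms(2)]
  define W where "W = cadj U * V"
  have W: "W \<in> carrier_mat d d" "cadj W = cadj V * U"
    using U V by (auto simp: W_def cadj_mult[of _ d d _ d])
  have "ctrace ((U * rdiag d a * cadj U) * (V * rdiag d b * cadj V)) =
      ctrace (U * (rdiag d a * (cadj U * (V * (rdiag d b * cadj V)))))"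
    using U V by (simp add: assoc_mult_mat[of _ d d _ d _ d] mult_carrier_mat[of _ d d _ d])
  also have "\<dots> = ctrace (rdiag d a * (cadj U * (V * (rdiag d b * cadj V))) * U)"
    using U V by (intro ctrace_comm[of _ d d]) auto
  also have "\<dots> = ctrace (rdiag d a * (W * (rdiag d b * cadj W)))"
    unfolding W(2) unfolding W_def
    using U V by (simp add: assoc_mult_mat[of _ d d _ d _ d] mult_carrier_mat[of _ d d _ d])
  also have "\<dots> = (\<Sum>i<d. of_real (a i) * (W * (rdiag d b * cadj W)) $$ (i,i))"
    using W(1) by (simp add: ctrace_def mult_carrier_mat[of _ d d _ d] index_rdiag_mult[of _ d d]
        del: index_mult_mat(1))
  also have "\<dots> = (\<Sum>i<d. of_real (a i) * (\<Sum>j<d. W $$ (i,j) * (of_real (b j) * cnj (W $$ (i,j)))))"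
  proof (rule sum.cong[OF refl])
    fix i assume i: "i \<in> {..<d}"
    have "(W * (rdiag d b * cadj W)) $$ (i,i) = (\<Sum>j<d. W $$ (i,j) * (rdiag d b * cadj W) $$ (j,i))"
      using W(1) i by (auto simp: scalar_prod_def atLeast0LessThan intro!: sum.cong)
    also have "\<dots> = (\<Sum>j<d. W $$ (i,j) * (of_real (b j) * cnj (W $$ (i,j))))"
      using W(1) i by (auto simp: index_rdiag_mult[of "cadj W" d d] simp del: index_mult_mat(1)
          intro!: sum.cong)
    finally show "of_real (a i) * (W * (rdiag d b * cadj W)) $$ (i,i) =
        of_real (a i) * (\<Sum>j<d. W $$ (i,j) * (of_real (b j) * cnj (W $$ (i,j))))"
      by simp
  qed
  also have "\<dots> = of_real (\<Sum>i<d. \<Sum>j<d. a i * b j * basis_overlap U V i j)"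
    by (simp add: basis_overlap_def W_def sum_distrib_left mult_ac complex_mult_cnj_cmod)
  finally show ?thesis .
qed

lemma ctrace_diff_sq_udiag:
  fixes a b :: "nat \<Rightarrow> real"
  assumes U: "unitary_mat d U" and V: "unitary_mat d V"
  defines "A \<equiv> U * rdiag d a * cadj U" and "B \<equiv> V * rdiag d b * cadj V"
  shows "Re (ctrace ((A - B) * (A - B))) = (\<Sum>i<d. \<Sum>j<d. basis_overlap U V i j * (a i - b j)\<^sup>2)"
proof -
  note u = unitary_matD[OF U] and v = unitary_matD[OF V]
  let ?w = "basis_overlap U V"
  have w: "doubly_stochastic d ?w"
    by (rule doubly_stochastic_basis_overlap[OF U V])
  have AB: "A \<in> carrier_mat d d" "B \<in> carrier_mat d d"
    using u v by (auto simp: A_def B_def)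
  have "ctrace ((A - B) * (A - B)) = ctrace (A * A) - ctrace (A * B) - ctrace (B * A) + ctrace (B * B)"
    using AB by (simp add: minus_mult_distrib_mat[of _ d d] mult_minus_distrib_mat[of _ d d]
        ctrace_minus[of _ d] minus_carrier_mat mult_carrier_mat[of _ d d _ d])
  also have "ctrace (B * A) = ctrace (A * B)"
    using AB by (rule ctrace_comm[symmetric])
  also have "ctrace (A * A) = of_real (\<Sum>i<d. a i * a i)"
    unfolding A_def udiag_mult_udiag[OF U] ctrace_udiag[OF U] ..
  also have "ctrace (B * B) = of_real (\<Sum>j<d. b j * b j)"
    unfolding B_def udiag_mult_udiag[OF V] ctrace_udiag[OF V] ..
  also have "ctrace (A * B) = of_real (\<Sum>i<d. \<Sum>j<d. a i * b j * ?w i j)"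
    unfolding A_def B_def by (rule ctrace_udiag_mult_udiag[OF U V])
  finally have "Re (ctrace ((A - B) * (A - B))) =
      (\<Sum>i<d. a i * a i) - 2 * (\<Sum>i<d. \<Sum>j<d. a i * b j * ?w i j) + (\<Sum>j<d. b j * b j)"
    by simp
  also have "\<dots> = (\<Sum>i<d. \<Sum>j<d. ?w i j * (a i * a i)) - 2 * (\<Sum>i<d. \<Sum>j<d. a i * b j * ?w i j)
      + (\<Sum>i<d. \<Sum>j<d. ?w i j * (b j * b j))"
    using doubly_stochastic_sum_rows[OF w] doubly_stochastic_sum_cols[OF w] by simp
  also have "\<dots> = (\<Sum>i<d. \<Sum>j<d. ?w i j * (a i - b j)\<^sup>2)"
    by (simp add: power2_eq_square algebra_simps sum.distrib sum_subtractf sum_distrib_left)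
  finally show ?thesis .
qed

section \<open>Spectral theorem for Hermitian matrices\<close>

(* The reflection I - c w w^* for c = 2 / |w|^2; the hypothesis also admits c = 0. *)
lemma householder_unitary:
  fixes w :: "nat \<Rightarrow> complex" and c :: real
  assumes norm: "c\<^sup>2 * (\<Sum>m<d. (cmod (w m))\<^sup>2) = 2 * c"
  defines "H \<equiv> mat d d (\<lambda>(i,j). (if i = j then 1 else 0) - of_real c * w i * cnj (w j))"
  shows "unitary_mat d H" "cadj H = H"
proof -
  let ?C = "complex_of_real c"
  show adj: "cadj H = H"
    by (rule eq_matI) (auto simp: H_def)
  have norm': "?C\<^sup>2 * (\<Sum>m<d. w m * cnj (w m)) = 2 * ?C"
    using arg_cong[OF norm, of complex_of_real] by (simp add: complex_mult_cnj_cmod)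
  have "H * H = 1\<^sub>m d"
  proof (rule eq_matI)
    fix i j assume "i < dim_row (1\<^sub>m d)" "j < dim_col (1\<^sub>m d)"
    then have i: "i < d" and j: "j < d"
      by auto
    have "(H * H) $$ (i,j) = (\<Sum>m<d. ((if i = m then 1 else 0) - ?C * w i * cnj (w m)) *
        ((if m = j then 1 else 0) - ?C * w m * cnj (w j)))"
      using i j by (simp add: H_def scalar_prod_def atLeast0LessThan)
    also have "\<dots> = (\<Sum>m<d. if m = i then (if i = j then 1 else 0) - ?C * w i * cnj (w j) else 0)
        - (\<Sum>m<d. if m = j then ?C * w i * cnj (w j) else 0)
        + ?C\<^sup>2 * (\<Sum>m<d. w m * cnj (w m)) * w i * cnj (w j)"
    proof -
      have "((if i = m then 1 else 0) - ?C * w i * cnj (w m)) *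
          ((if m = j then 1 else 0) - ?C * w m * cnj (w j)) =
          (if m = i then (if i = j then 1 else 0) - ?C * w i * cnj (w j) else 0)
          - (if m = j then ?C * w i * cnj (w j) else 0)
          + ?C\<^sup>2 * (w m * cnj (w m)) * w i * cnj (w j)" for m
        by (auto simp: algebra_simps power2_eq_square)
      then show ?thesis
        by (simp add: sum.distrib sum_subtractf sum_distrib_left sum_distrib_right mult.assoc)
    qed
    also have "\<dots> = (if i = j then 1 else 0)"
      using i j by (simp add: norm')
    finally show "(H * H) $$ (i,j) = 1\<^sub>m d $$ (i,j)"
      using i j by simp
  qed (auto simp: H_def)
  then show "unitary_mat d H"
    using adj by (simp add: unitary_mat_def H_def)
qed

lemma sum_cmod_sq_unit_vec_diff:
  assumes k: "k < d" and zn: "(\<Sum>i<d. (cmod (z $ i))\<^sup>2) = 1" and zk: "z $ k = of_real r"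
  shows "(\<Sum>i<d. (cmod ((if i = k then 1 else 0) - z $ i))\<^sup>2) = 2 - 2 * r"
proof -
  let ?rest = "\<Sum>i\<in>{..<d}-{k}. (cmod (z $ i))\<^sup>2"
  have "1 - z $ k = of_real (1 - r)"
    using zk by simp
  then have "(cmod (1 - z $ k))\<^sup>2 = (1 - r)\<^sup>2"
    by (simp only: norm_of_real power2_abs)
  moreover have "(\<Sum>i<d. (cmod ((if i = k then 1 else 0) - z $ i))\<^sup>2) = (cmod (1 - z $ k))\<^sup>2 + ?rest"
    using k by (simp add: sum.remove[of "{..<d}" k])
  moreover have "1 = r\<^sup>2 + ?rest"
    using k zn zk by (simp add: sum.remove[of "{..<d}" k])
  ultimately show ?thesis
    by (simp add: power2_eq_square algebra_simps)
qed

(* The coefficient of the reflection in w; if r = 1 then w = 0 and the coefficient is 0. *)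
lemma householder_coeff:
  fixes w :: "nat \<Rightarrow> complex"
  assumes wn: "(\<Sum>m<d. (cmod (w m))\<^sup>2) = 2 - 2 * r"
  defines "c \<equiv> 1 / (1 - r)"
  shows "c\<^sup>2 * (\<Sum>m<d. (cmod (w m))\<^sup>2) = 2 * c"
    and "i < d \<Longrightarrow> of_real c * w i * of_real (1 - r) = w i"
proof -
  show "c\<^sup>2 * (\<Sum>m<d. (cmod (w m))\<^sup>2) = 2 * c"
  proof (cases "r = 1")
    case False
    then have "c * (1 - r) = 1"
      by (simp add: c_def)
    moreover have "c\<^sup>2 * (2 - 2 * r) = 2 * c * (c * (1 - r))"
      by (simp add: power2_eq_square algebra_simps)
    ultimately show ?thesis
      by (simp add: wn)
  qed (simp add: c_def)
  show "of_real c * w i * of_real (1 - r) = w i" if i: "i < d"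
  proof (cases "r = 1")
    case True
    then have "(\<Sum>m<d. (cmod (w m))\<^sup>2) = 0"
      using wn by simp
    then show ?thesis
      using i by (simp add: sum_nonneg_eq_0_iff)
  next
    case False
    then have "of_real c * of_real (1 - r) = (1 :: complex)"
      by (simp add: c_def flip: of_real_mult)
    then show ?thesis
      by (metis mult.commute mult.left_neutral mult.assoc)
  qed
qed

(* Reflection in w = e_k - z, which maps e_k to z because z_k is real. *)
lemma unitary_completion:
  assumes k: "k < d" and z0: "\<forall>i<k. z $ i = 0" and z: "z \<in> carrier_vec d"
    and zn: "(\<Sum>i<d. (cmod (z $ i))\<^sup>2) = 1" and zk: "z $ k = of_real r"
  obtains V where "unitary_mat d V" "cadj V = V" "\<forall>j<k. col V j = unit_vec d j" "col V k = z"
proof -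
  define w where "w i = (if i = k then 1 else 0) - z $ i" for i
  define c where "c = 1 / (1 - r)"
  have wn: "(\<Sum>m<d. (cmod (w m))\<^sup>2) = 2 - 2 * r"
    unfolding w_def by (rule sum_cmod_sq_unit_vec_diff[OF k zn zk])
  note coeff = householder_coeff[OF wn, folded c_def]
  from householder_unitary[OF coeff(1)] obtain V where V: "unitary_mat d V" "cadj V = V"
    and V_def: "V = mat d d (\<lambda>(i,j). (if i = j then 1 else 0) - of_real c * w i * cnj (w j))"
    by blast
  have wk: "cnj (w k) = of_real (1 - r)"
    using zk by (simp add: w_def)
  have "col V k $ i = z $ i" if "i < d" for i
  proof -
    have "col V k $ i = (if i = k then 1 else 0) - of_real c * w i * cnj (w k)"
      using that k by (simp add: V_def)
    also have "\<dots> = (if i = k then 1 else 0) - w i"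
      by (simp only: wk coeff(2)[OF that])
    finally show ?thesis
      by (simp add: w_def)
  qed
  then have "col V k = z"
    using z k by (auto simp: V_def)
  moreover have "\<forall>j<k. col V j = unit_vec d j"
    using k z0 by (auto simp: V_def w_def)
  ultimately show ?thesis
    using that V by blast
qed

lemma complex_mat_eigenvector:
  assumes S: "(S :: complex mat) \<in> carrier_mat n n" and n: "0 < n"
  obtains \<mu> y where "y \<in> carrier_vec n" "y \<noteq> 0\<^sub>v n" "S *\<^sub>v y = \<mu> \<cdot>\<^sub>v y"
proof -
  obtain as where cp: "char_poly S = (\<Prod>a\<leftarrow>as. [:- a, 1:])" and len: "length as = n"
    using char_poly_factorized[OF S] by blast
  then obtain a rest where "as = a # rest"
    using n by (cases as) auto
  then have "poly (char_poly S) a = 0"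
    unfolding cp by (simp add: poly_prod_list)
  then have "eigenvector S (find_eigenvector S a) a"
    using find_eigenvector[OF S] eigenvalue_root_char_poly[OF S] by simp
  then show ?thesis
    using S that unfolding eigenvector_def by auto
qed

lemma zero_extend_block_eigenvector:
  assumes T: "T \<in> carrier_mat d d" and k: "k \<le> d"
    and upper: "\<forall>i<k. \<forall>j<d-k. T $$ (i, j+k) = 0"
    and y: "y \<in> carrier_vec (d-k)" and Sy: "mat (d-k) (d-k) (\<lambda>(i,j). T $$ (i+k, j+k)) *\<^sub>v y = \<mu> \<cdot>\<^sub>v y"
  defines "x \<equiv> vec d (\<lambda>i. if i < k then 0 else y $ (i-k))"
  shows "T *\<^sub>v x = \<mu> \<cdot>\<^sub>v x"
proof (rule eq_vecI)
  fix i assume "i < dim_vec (\<mu> \<cdot>\<^sub>v x)"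
  then have i: "i < d"
    by (simp add: x_def)
  have "(T *\<^sub>v x) $ i = (\<Sum>j\<in>{0..<d}. T $$ (i,j) * x $ j)"
    using T i by (auto simp: x_def scalar_prod_def)
  also have "\<dots> = (\<Sum>j\<in>{k..<d}. T $$ (i,j) * x $ j)"
    by (rule sum.mono_neutral_right) (auto simp: x_def)
  also have "\<dots> = (\<Sum>j\<in>{0..<d-k}. T $$ (i, j+k) * x $ (j+k))"
    using k sum.shift_bounds_nat_ivl[of "\<lambda>j. T $$ (i,j) * x $ j" 0 k "d-k"] by simp
  also have "\<dots> = (\<Sum>j<d-k. T $$ (i, j+k) * y $ j)"
    using k by (simp add: x_def atLeast0LessThan)
  finally have Tx: "(T *\<^sub>v x) $ i = (\<Sum>j<d-k. T $$ (i, j+k) * y $ j)" .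
  show "(T *\<^sub>v x) $ i = (\<mu> \<cdot>\<^sub>v x) $ i"
  proof (cases "i < k")
    case True
    then have "(T *\<^sub>v x) $ i = 0"
      unfolding Tx using upper by simp
    then show ?thesis
      using True i by (simp add: x_def)
  next
    case False
    have "(\<Sum>j<d-k. T $$ (i, j+k) * y $ j) = (mat (d-k) (d-k) (\<lambda>(i,j). T $$ (i+k, j+k)) *\<^sub>v y) $ (i-k)"
      using False i y by (auto simp: scalar_prod_def atLeast0LessThan)
    then have "(T *\<^sub>v x) $ i = \<mu> * y $ (i-k)"
      unfolding Tx using False i y by (simp add: Sy)
    then show ?thesis
      using False i by (simp add: x_def)
  qed
qed (use T in \<open>simp add: x_def\<close>)

lemma hermitian_trailing_eigenvector:
  assumes T: "T \<in> carrier_mat d d" "cadj T = T" and k: "k < d"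
    and diag: "\<forall>i<d. \<forall>j<k. i \<noteq> j \<longrightarrow> T $$ (i,j) = 0"
  obtains \<mu> x where "x \<in> carrier_vec d" "x \<noteq> 0\<^sub>v d" "\<forall>i<k. x $ i = 0" "T *\<^sub>v x = \<mu> \<cdot>\<^sub>v x"
proof -
  define S where "S = mat (d-k) (d-k) (\<lambda>(i,j). T $$ (i+k, j+k))"
  have S: "S \<in> carrier_mat (d-k) (d-k)"
    by (simp add: S_def)
  obtain \<mu> y where y: "y \<in> carrier_vec (d-k)" "y \<noteq> 0\<^sub>v (d-k)" and Sy: "S *\<^sub>v y = \<mu> \<cdot>\<^sub>v y"
    by (rule complex_mat_eigenvector[OF S]) (use k in auto)
  define x where "x = vec d (\<lambda>i. if i < k then 0 else y $ (i-k))"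
  have "T $$ (i, j+k) = cnj (T $$ (j+k, i))" if "i < k" "j < d-k" for i j
    using arg_cong[OF T(2), of "\<lambda>M. M $$ (i, j+k)"] T(1) k that by simp
  then have "\<forall>i<k. \<forall>j<d-k. T $$ (i, j+k) = 0"
    using diag by simp
  from zero_extend_block_eigenvector[OF T(1) _ this y(1) Sy[unfolded S_def]] k
  have "T *\<^sub>v x = \<mu> \<cdot>\<^sub>v x"
    by (simp add: x_def)
  moreover obtain j where j: "j < d-k" "y $ j \<noteq> 0"
    using y by (metis eq_vecI carrier_vecD index_zero_vec)
  then have "x $ (j+k) \<noteq> 0"
    by (simp add: x_def)
  then have "x \<noteq> 0\<^sub>v d"
    using j by auto
  ultimately show ?thesis
    using k by (intro that[of x \<mu>]) (auto simp: x_def)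
qed

lemma normalize_with_real_entry:
  assumes x: "x \<in> carrier_vec d" "x \<noteq> 0\<^sub>v d"
  obtains a :: complex and r :: real
  where "(\<Sum>i<d. (cmod (a * x $ i))\<^sup>2) = 1" "a * x $ k = of_real r"
proof -
  define n where "n = sqrt (\<Sum>i<d. (cmod (x $ i))\<^sup>2)"
  obtain j where "j < d" "x $ j \<noteq> 0"
    using x by (metis eq_vecI carrier_vecD index_zero_vec)
  then have "0 < (\<Sum>i<d. (cmod (x $ i))\<^sup>2)"
    by (intro sum_pos2[of _ j]) auto
  then have n: "0 < n" "n\<^sup>2 = (\<Sum>i<d. (cmod (x $ i))\<^sup>2)"
    by (auto simp: n_def)
  define \<alpha> where "\<alpha> = (if x $ k = 0 then 1 else cnj (x $ k) / cmod (x $ k))"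
  have \<alpha>: "cmod \<alpha> = 1"
    by (simp add: \<alpha>_def norm_divide)
  have "(\<Sum>i<d. (cmod (\<alpha> / n * x $ i))\<^sup>2) = (\<Sum>i<d. (cmod (x $ i))\<^sup>2) / n\<^sup>2"
    by (simp add: norm_mult norm_divide \<alpha> power_divide sum_divide_distrib)
  moreover have "\<alpha> / n * x $ k = of_real (cmod (x $ k) / n)"
    by (simp add: \<alpha>_def complex_mult_cnj_cmod power2_eq_square mult.commute)
  ultimately show ?thesis
    using n by (intro that[of "\<alpha> / n" "cmod (x $ k) / n"]) auto
qed

lemma unitary_conj_eigencolumn:
  assumes V: "unitary_mat d V" and T: "T \<in> carrier_mat d d" and j: "j < d"
    and eig: "T *\<^sub>v col V j = \<mu> \<cdot>\<^sub>v col V j" and i: "i < d" "i \<noteq> j"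
  shows "(cadj V * T * V) $$ (i,j) = 0"
proof -
  note v = unitary_matD[OF V]
  have "col (cadj V * T * V) j = cadj V *\<^sub>v (T *\<^sub>v col V j)"
    using v T j by (simp add: col_mult2[of "cadj V * T" d d V d] mult_carrier_mat[of _ d d _ d]
        assoc_mult_mat_vec[of "cadj V" d d T d])
  also have "\<dots> = \<mu> \<cdot>\<^sub>v (cadj V *\<^sub>v col V j)"
    using v j by (simp add: eig mult_mat_vec[of "cadj V" d d])
  also have "cadj V *\<^sub>v col V j = col (cadj V * V) j"
    using v j by (intro col_mult2[symmetric]) auto
  also have "\<dots> = unit_vec d j"
    unfolding v(4) using j by simp
  finally have "col (cadj V * T * V) j = \<mu> \<cdot>\<^sub>v unit_vec d j" .
  moreover have "(cadj V * T * V) $$ (i,j) = col (cadj V * T * V) j $ i"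
    using v T i j by (intro index_col[symmetric]) auto
  ultimately show ?thesis
    using i j by simp
qed

lemma hermitian_unitary_conj:
  assumes "hermitian_mat d A" "U \<in> carrier_mat d d"
  shows "hermitian_mat d (cadj U * A * U)"
  using assms by (auto simp: hermitian_mat_def cadj_mult[of _ d d _ d] mult_carrier_mat[of _ d d _ d]
      assoc_mult_mat[of _ d d _ d _ d])

lemma hermitian_trailing_unit_eigenvector:
  assumes T: "T \<in> carrier_mat d d" "cadj T = T" and k: "k < d"
    and diag: "\<forall>i<d. \<forall>j<k. i \<noteq> j \<longrightarrow> T $$ (i,j) = 0"
  obtains \<mu> z r where "z \<in> carrier_vec d" "\<forall>i<k. z $ i = 0" "(\<Sum>i<d. (cmod (z $ i))\<^sup>2) = 1"
    "z $ k = of_real r" "T *\<^sub>v z = \<mu> \<cdot>\<^sub>v z"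
proof -
  obtain \<mu> x where x: "x \<in> carrier_vec d" "x \<noteq> 0\<^sub>v d" "\<forall>i<k. x $ i = 0"
    and Tx: "T *\<^sub>v x = \<mu> \<cdot>\<^sub>v x"
    using hermitian_trailing_eigenvector[OF T k diag] by blast
  obtain a r where norm: "(\<Sum>i<d. (cmod (a * x $ i))\<^sup>2) = 1" and real: "a * x $ k = of_real r"
    using normalize_with_real_entry[OF x(1,2)] by blast
  have "T *\<^sub>v (a \<cdot>\<^sub>v x) = \<mu> \<cdot>\<^sub>v (a \<cdot>\<^sub>v x)"
    using T x by (simp add: mult_mat_vec[of T d d] Tx smult_smult_assoc mult.commute)
  then show ?thesis
    using that[of "a \<cdot>\<^sub>v x" r \<mu>] x k norm real by auto
qed

lemma mult_unit_vec_diagonal_col: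
  fixes T :: "complex mat"
  assumes T: "T \<in> carrier_mat d d" and j: "j < d"
    and col: "\<forall>i<d. i \<noteq> j \<longrightarrow> T $$ (i,j) = 0"
  shows "T *\<^sub>v unit_vec d j = T $$ (j,j) \<cdot>\<^sub>v unit_vec d j"
proof -
  have "T *\<^sub>v unit_vec d j = col T j"
    using T j col_mult2[of T d d "1\<^sub>m d" d j] right_mult_one_mat[OF T] by simp
  also have "\<dots> = T $$ (j,j) \<cdot>\<^sub>v unit_vec d j"
    using T j col by (intro eq_vecI) auto
  finally show ?thesis .
qed

lemma unitary_conj_mult:
  assumes U: "unitary_mat d U" and V: "unitary_mat d V" and A: "A \<in> carrier_mat d d"
  shows "cadj (U * V) * A * (U * V) = cadj V * (cadj U * A * U) * V"
proof -
  note u = unitary_matD[OF U] and v = unitary_matD[OF V]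
  have "cadj (U * V) = cadj V * cadj U"
    using u v by (intro cadj_mult) auto
  then show ?thesis
    using u v A by (simp add: mult_carrier_mat[of _ d d _ d] assoc_mult_mat[of _ d d _ d _ d])
qed

(* Conjugating by a unitary whose k-th column is an eigenvector of the trailing block and whose
   first k columns are unit vectors clears column k without disturbing columns 0, ..., k-1. *)
lemma hermitian_diagonalize_step:
  assumes A: "hermitian_mat d A" and U: "unitary_mat d U" and k: "k < d"
    and diag: "\<forall>i<d. \<forall>j<k. i \<noteq> j \<longrightarrow> (cadj U * A * U) $$ (i,j) = 0"
  obtains U' where "unitary_mat d U'" "\<forall>i<d. \<forall>j<Suc k. i \<noteq> j \<longrightarrow> (cadj U' * A * U') $$ (i,j) = 0"
proof -
  define T where "T = cadj U * A * U"
  have T: "T \<in> carrier_mat d d" "cadj T = T"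
    using hermitian_unitary_conj[OF A unitary_matD(1)[OF U]] by (auto simp: T_def hermitian_mat_def)
  obtain \<mu> z r where z: "z \<in> carrier_vec d" "\<forall>i<k. z $ i = 0" "(\<Sum>i<d. (cmod (z $ i))\<^sup>2) = 1"
      "z $ k = of_real r" and Tz: "T *\<^sub>v z = \<mu> \<cdot>\<^sub>v z"
    by (rule hermitian_trailing_unit_eigenvector[OF T k diag[folded T_def]])
  obtain V where V: "unitary_mat d V" and Vj: "\<forall>j<k. col V j = unit_vec d j" and Vk: "col V k = z"
    by (rule unitary_completion[OF k z(2,1,3,4)])
  have "(cadj V * T * V) $$ (i,j) = 0" if "i < d" "j < Suc k" "i \<noteq> j" for i j
  proof (rule unitary_conj_eigencolumn[OF V T(1)])
    show "T *\<^sub>v col V j = (if j < k then T $$ (j,j) else \<mu>) \<cdot>\<^sub>v col V j"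
    proof (cases "j < k")
      case True
      have "\<forall>i<d. i \<noteq> j \<longrightarrow> T $$ (i,j) = 0"
        using diag True unfolding T_def by simp
      then show ?thesis
        using mult_unit_vec_diagonal_col[OF T(1)] Vj True k by simp
    next
      case False
      then have "j = k"
        using that by simp
      then show ?thesis
        using Tz Vk by simp
    qed
  qed (use that k in auto)
  moreover have "cadj (U * V) * A * (U * V) = cadj V * T * V"
    unfolding T_def using A by (intro unitary_conj_mult[OF U V]) (simp add: hermitian_mat_def)
  ultimately show ?thesis
    using that[OF unitary_mult[OF U V]] by simp
qed

lemma hermitian_diagonalize_cols:
  assumes A: "hermitian_mat d A" and k: "k \<le> d"
  shows "\<exists>U. unitary_mat d U \<and> (\<forall>i<d. \<forall>j<k. i \<noteq> j \<longrightarrow> (cadj U * A * U) $$ (i,j) = 0)"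
  using k
proof (induction k)
  case 0
  show ?case
    using unitary_one_mat by blast
next
  case (Suc k)
  then obtain U where U: "unitary_mat d U"
    and diagU: "\<forall>i<d. \<forall>j<k. i \<noteq> j \<longrightarrow> (cadj U * A * U) $$ (i,j) = 0"
    by auto
  have "k < d"
    using Suc.prems by simp
  show ?case
    by (rule hermitian_diagonalize_step[OF A U \<open>k < d\<close> diagU]) blast
qed

lemma hermitian_diagonal_eq_rdiag:
  assumes T: "T \<in> carrier_mat d d" "cadj T = T"
    and diag: "\<forall>i<d. \<forall>j<d. i \<noteq> j \<longrightarrow> T $$ (i,j) = 0"
  shows "T = rdiag d (\<lambda>i. Re (T $$ (i,i)))"
proof (rule eq_matI)
  fix i j assume ij: "i < dim_row (rdiag d (\<lambda>i. Re (T $$ (i,i))))"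
    "j < dim_col (rdiag d (\<lambda>i. Re (T $$ (i,i))))"
  have "cnj (T $$ (i,i)) = T $$ (i,i)"
    using arg_cong[OF T(2), of "\<lambda>M. M $$ (i,i)"] T(1) ij by simp
  then have "Im (T $$ (i,i)) = 0"
    by (simp add: complex_eq_iff)
  then show "T $$ (i,j) = rdiag d (\<lambda>i. Re (T $$ (i,i))) $$ (i,j)"
    using diag ij by (auto simp: complex_eq_iff)
qed (use T(1) in simp_all)

lemma hermitian_spectral_decomposition:
  assumes A: "hermitian_mat d A"
  obtains U l where "unitary_mat d U" "A = U * rdiag d l * cadj U"
proof -
  obtain U where U: "unitary_mat d U"
    and diag: "\<forall>i<d. \<forall>j<d. i \<noteq> j \<longrightarrow> (cadj U * A * U) $$ (i,j) = 0"
    using hermitian_diagonalize_cols[OF A order_refl] by blast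
  note u = unitary_matD[OF U]
  define T where "T = cadj U * A * U"
  have T: "T \<in> carrier_mat d d" "cadj T = T"
    using hermitian_unitary_conj[OF A u(1)] by (auto simp: T_def hermitian_mat_def)
  have "A \<in> carrier_mat d d"
    using A by (simp add: hermitian_mat_def)
  then have "A = U * T * cadj U"
    using u by (simp add: T_def assoc_mult_mat[of _ d d _ d _ d] mult_carrier_mat[of _ d d _ d]
        unitary_cancel[OF U])
  also have "T = rdiag d (\<lambda>i. Re (T $$ (i,i)))"
    using hermitian_diagonal_eq_rdiag[OF T diag[folded T_def]] .
  finally show ?thesis
    using that[OF U] by blast
qed

lemma psd_udiag_nonneg:
  assumes A: "psd_mat d A" and U: "unitary_mat d U" and A_eq: "A = U * rdiag d l * cadj U"
    and i: "i < d"
  shows "0 \<le> l i"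
proof -
  note u = unitary_matD[OF U]
  have Ac: "A \<in> carrier_mat d d"
    using A by (simp add: psd_mat_def hermitian_mat_def)
  define v where "v = col U i"
  have v: "v \<in> carrier_vec d"
    using u i by (simp add: v_def)
  have "cadj U * A * U = rdiag d l"
    unfolding A_eq using u
    by (simp add: assoc_mult_mat[of _ d d _ d _ d] mult_carrier_mat[of _ d d _ d] unitary_cancel[OF U])
  then have "complex_of_real (l i) = (cadj U * (A * U)) $$ (i,i)"
    using u Ac i by (simp add: assoc_mult_mat[of _ d d _ d _ d])
  also have "\<dots> = conjugate v \<bullet> (A *\<^sub>v v)"
    using u Ac i by (simp add: v_def conjugate_vec_def scalar_prod_def)
  finally have "l i = Re (conjugate v \<bullet> (A *\<^sub>v v))"
    by (metis Re_complex_of_real)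
  then show ?thesis
    using A v by (simp add: psd_mat_def)
qed

lemma quantum_state_spectral:
  assumes "quantum_state d \<rho>"
  obtains U p where "unitary_mat d U" "\<rho> = U * rdiag d p * cadj U" "prob_vector d p"
proof -
  have psd: "psd_mat d \<rho>" and tr: "ctrace \<rho> = 1"
    using assms by (auto simp: quantum_state_def)
  have "hermitian_mat d \<rho>"
    using psd by (simp add: psd_mat_def)
  then obtain U p where U: "unitary_mat d U" and \<rho>: "\<rho> = U * rdiag d p * cadj U"
    by (rule hermitian_spectral_decomposition)
  have "complex_of_real (\<Sum>i<d. p i) = 1"
    using tr ctrace_udiag[OF U] by (simp add: \<rho>)
  then have "(\<Sum>i<d. p i) = 1"
    by (simp only: of_real_eq_1_iff)
  then have "prob_vector d p"
    using psd_udiag_nonneg[OF psd U \<rho>] by (simp add: prob_vector_def)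
  then show ?thesis
    using that U \<rho> by blast
qed

lemma depolarize_udiag:
  assumes V: "unitary_mat d V"
  shows "depolarize d e (V * rdiag d s * cadj V) = V * rdiag d (\<lambda>j. (1 - e) * s j + e / real d) * cadj V"
proof -
  note v = unitary_matD[OF V]
  let ?a = "complex_of_real (1 - e)" and ?b = "complex_of_real (e / real d)"
  have R: "rdiag d (\<lambda>j. (1 - e) * s j + e / real d) = ?a \<cdot>\<^sub>m rdiag d s + ?b \<cdot>\<^sub>m 1\<^sub>m d"
    by (rule eq_matI) auto
  have "V * rdiag d (\<lambda>j. (1 - e) * s j + e / real d) * cadj V =
      (V * (?a \<cdot>\<^sub>m rdiag d s) + V * (?b \<cdot>\<^sub>m 1\<^sub>m d)) * cadj V"
    unfolding R by (subst mult_add_distrib_mat[of _ d d]) (use v in auto)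
  also have "\<dots> = (?a \<cdot>\<^sub>m (V * rdiag d s) + ?b \<cdot>\<^sub>m (V * 1\<^sub>m d)) * cadj V"
    by (subst (1 2) mult_smult_distrib[of _ d d]) (use v in auto)
  also have "\<dots> = (?a \<cdot>\<^sub>m (V * rdiag d s)) * cadj V + (?b \<cdot>\<^sub>m (V * 1\<^sub>m d)) * cadj V"
    by (subst add_mult_distrib_mat[of _ d d]) (use v in auto)
  also have "\<dots> = ?a \<cdot>\<^sub>m (V * rdiag d s * cadj V) + ?b \<cdot>\<^sub>m (V * 1\<^sub>m d * cadj V)"
    by (subst (1 2) mult_smult_assoc_mat[of _ d d]) (use v in auto)
  finally show ?thesis
    using v by (simp add: depolarize_def)
qed

lemma hellinger_sq_udiag:
  assumes U: "unitary_mat d U" and V: "unitary_mat d V"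
  shows "hellinger_sq d (U * rdiag d p * cadj U) (V * rdiag d s * cadj V) =
    (\<Sum>i<d. \<Sum>j<d. basis_overlap U V i j * (sqrt (p i) - sqrt (s j))\<^sup>2)"
  unfolding hellinger_sq_def msqrt_def mat_fun_udiag[OF U refl] mat_fun_udiag[OF V refl]
  using ctrace_diff_sq_udiag[OF U V] by simp

lemma rel_entropy_udiag:
  assumes U: "unitary_mat d U" and V: "unitary_mat d V"
  shows "rel_entropy d (U * rdiag d p * cadj U) (V * rdiag d q * cadj V) =
    (\<Sum>i<d. \<Sum>j<d. basis_overlap U V i j * (p i * (ln (p i) - ln (q j))))"
proof -
  note u = unitary_matD[OF U] and v = unitary_matD[OF V]
  let ?w = "basis_overlap U V"
  define \<rho> where "\<rho> = U * rdiag d p * cadj U"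
  have carrier: "\<rho> \<in> carrier_mat d d" "mln d \<rho> \<in> carrier_mat d d"
    "mln d (V * rdiag d q * cadj V) \<in> carrier_mat d d"
    unfolding mln_def \<rho>_def mat_fun_udiag[OF U refl] mat_fun_udiag[OF V refl] using u v by auto
  have "ctrace (\<rho> * (mln d \<rho> - mln d (V * rdiag d q * cadj V))) =
      ctrace (\<rho> * mln d \<rho>) - ctrace (\<rho> * mln d (V * rdiag d q * cadj V))"
    using carrier by (simp add: mult_minus_distrib_mat[of _ d d _ d] ctrace_minus[of _ d])
  also have "ctrace (\<rho> * mln d \<rho>) = of_real (\<Sum>i<d. p i * ln (p i))"
    unfolding mln_def \<rho>_def mat_fun_udiag[OF U refl] udiag_mult_udiag[OF U] ctrace_udiag[OF U]
    by simp
  also have "ctrace (\<rho> * mln d (V * rdiag d q * cadj V)) =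
      of_real (\<Sum>i<d. \<Sum>j<d. p i * ln (q j) * ?w i j)"
    unfolding mln_def \<rho>_def mat_fun_udiag[OF V refl] ctrace_udiag_mult_udiag[OF U V] by simp
  finally have "rel_entropy d \<rho> (V * rdiag d q * cadj V) =
      (\<Sum>i<d. p i * ln (p i)) - (\<Sum>i<d. \<Sum>j<d. p i * ln (q j) * ?w i j)"
    by (simp add: rel_entropy_def)
  also have "\<dots> = (\<Sum>i<d. \<Sum>j<d. ?w i j * (p i * ln (p i))) - (\<Sum>i<d. \<Sum>j<d. p i * ln (q j) * ?w i j)"
    using doubly_stochastic_sum_rows[OF doubly_stochastic_basis_overlap[OF U V]] by simp
  also have "\<dots> = (\<Sum>i<d. \<Sum>j<d. ?w i j * (p i * (ln (p i) - ln (q j))))"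
    by (simp add: right_diff_distrib sum_subtractf mult_ac)
  finally show ?thesis
    by (simp add: \<rho>_def)
qed

section \<open>Scalar inequalities\<close>

lemma ln_le_quadratic_below_one:
  fixes t :: real
  assumes "0 < t" "t \<le> 1"
  shows "ln t \<le> (t - 1) - (t - 1)\<^sup>2 / 2"
proof -
  let ?h = "\<lambda>x::real. (x - 1) - (x - 1)\<^sup>2 / 2 - ln x"
  have "?h 1 \<le> ?h t"
  proof (rule DERIV_nonpos_imp_nonincreasing[OF assms(2)])
    fix x assume x: "t \<le> x" "x \<le> 1"
    then have "0 < x"
      using assms by simp
    then have "DERIV ?h x :> - ((x - 1)\<^sup>2 / x)"
      by (auto intro!: derivative_eq_intros simp: field_simps power2_eq_square)
    moreover have "- ((x - 1)\<^sup>2 / x) \<le> 0"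
      using \<open>0 < x\<close> by simp
    ultimately show "\<exists>y. DERIV ?h x :> y \<and> y \<le> 0"
      by blast
  qed
  then show ?thesis
    by simp
qed

lemma ln_le_half_diff_inverse:
  fixes t :: real
  assumes "1 \<le> t"
  shows "ln t \<le> (t - 1 / t) / 2"
proof -
  let ?h = "\<lambda>x::real. (x - 1 / x) / 2 - ln x"
  have "?h 1 \<le> ?h t"
  proof (rule DERIV_nonneg_imp_nondecreasing[OF assms])
    fix x assume x: "1 \<le> x" "x \<le> t"
    then have "0 < x"
      by simp
    then have "DERIV ?h x :> (x - 1)\<^sup>2 / (2 * x\<^sup>2)"
      by (auto intro!: derivative_eq_intros simp: field_simps power2_eq_square)
    moreover have "(x - 1)\<^sup>2 / (2 * x\<^sup>2) \<ge> 0"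
      by simp
    ultimately show "\<exists>y. DERIV ?h x :> y \<and> y \<ge> 0"
      by blast
  qed
  then show ?thesis
    by simp
qed

lemma sq_ln_bound_le_one:
  fixes t :: real
  assumes "0 \<le> t" "t \<le> 1"
  shows "2 * t\<^sup>2 * ln t - t\<^sup>2 + 1 \<le> 2 * (t - 1)\<^sup>2"
proof (cases "t = 0")
  case False
  then have "t\<^sup>2 * ln t \<le> t\<^sup>2 * ((t - 1) - (t - 1)\<^sup>2 / 2)"
    using assms ln_le_quadratic_below_one[of t] by (intro mult_left_mono) auto
  moreover have "2 * (t - 1)\<^sup>2 - (2 * (t\<^sup>2 * ((t - 1) - (t - 1)\<^sup>2 / 2)) - t\<^sup>2 + 1) = (1 - t) ^ 4"
    by (simp add: field_simps power2_eq_square power4_eq_xxxx)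
  moreover have "0 \<le> (1 - t) ^ 4"
    by simp
  ultimately show ?thesis
    by linarith
qed simp

lemma sq_ln_bound_ge_one:
  fixes t :: real
  assumes "1 \<le> t"
  shows "2 * t\<^sup>2 * ln t - t\<^sup>2 + 1 \<le> (2 + 2 * ln t) * (t - 1)\<^sup>2"
proof -
  have "2 * ln t * (2 * t - 1) \<le> (t - 1 / t) * (2 * t - 1)"
    using ln_le_half_diff_inverse[OF assms] assms by (intro mult_right_mono) auto
  also have "\<dots> \<le> (3 * t - 1) * (t - 1)"
  proof -
    have "(3 * t - 1) * (t - 1) - (t - 1 / t) * (2 * t - 1) = (t - 1) ^ 3 / t"
      using assms by (simp add: field_simps power3_eq_cube)
    moreover have "0 \<le> (t - 1) ^ 3 / t"
      using assms by simp
    ultimately show ?thesis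
      by linarith
  qed
  finally have "2 * ln t * (2 * t - 1) \<le> (3 * t - 1) * (t - 1)" .
  moreover have "(2 + 2 * ln t) * (t - 1)\<^sup>2 - (2 * t\<^sup>2 * ln t - t\<^sup>2 + 1) =
      (3 * t - 1) * (t - 1) - 2 * ln t * (2 * t - 1)"
    by (simp add: algebra_simps power2_eq_square)
  ultimately show ?thesis
    by linarith
qed

lemma sq_ln_bound:
  fixes t M :: real
  assumes "0 \<le> t" "1 \<le> M" "t\<^sup>2 \<le> M"
  shows "2 * t\<^sup>2 * ln t - t\<^sup>2 + 1 \<le> (2 + ln M) * (t - 1)\<^sup>2"
proof (cases "t \<le> 1")
  case True
  have "2 * (t - 1)\<^sup>2 \<le> (2 + ln M) * (t - 1)\<^sup>2"
    using assms by (intro mult_right_mono) auto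
  then show ?thesis
    using sq_ln_bound_le_one[OF assms(1) True] by linarith
next
  case False
  then have "2 * ln t = ln (t\<^sup>2)"
    by (simp add: ln_realpow)
  also have "\<dots> \<le> ln M"
    using assms False by simp
  finally have "(2 + 2 * ln t) * (t - 1)\<^sup>2 \<le> (2 + ln M) * (t - 1)\<^sup>2"
    by (intro mult_right_mono) auto
  then show ?thesis
    using sq_ln_bound_ge_one[of t] False by linarith
qed

lemma entropy_term_le:
  fixes P Q M :: real
  assumes P: "0 \<le> P" and Q: "0 < Q" and PM: "P \<le> M * Q" and M: "1 \<le> M"
  shows "P * (ln P - ln Q) \<le> (P - Q) + (2 + ln M) * (sqrt P - sqrt Q)\<^sup>2"
proof (cases "P = 0")
  case True
  have "Q \<le> (2 + ln M) * Q"
    using M Q by (simp add: algebra_simps)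
  then show ?thesis
    using True Q by simp
next
  case False
  define t where "t = sqrt (P / Q)"
  have "t\<^sup>2 = P / Q"
    using P Q by (simp add: t_def)
  then have t: "0 \<le> t" "P = t\<^sup>2 * Q" "sqrt P = t * sqrt Q"
    using P Q by (auto simp: t_def real_sqrt_divide)
  have "t\<^sup>2 \<le> M"
    using PM Q t(2) by simp
  have "P * (ln P - ln Q) - (P - Q) = Q * (2 * t\<^sup>2 * ln t - t\<^sup>2 + 1)"
    using False Q t by (simp add: ln_mult ln_realpow algebra_simps)
  also have "\<dots> \<le> Q * ((2 + ln M) * (t - 1)\<^sup>2)"
    using sq_ln_bound[OF t(1) M \<open>t\<^sup>2 \<le> M\<close>] Q by (intro mult_left_mono) auto
  also have "\<dots> = (2 + ln M) * (sqrt P - sqrt Q)\<^sup>2"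
    using Q by (simp add: t(3) power2_eq_square algebra_simps)
  finally show ?thesis
    by simp
qed

lemma sqrt_diff_sq_le_abs_diff:
  fixes a b :: real
  assumes "0 \<le> a" "0 \<le> b"
  shows "(sqrt a - sqrt b)\<^sup>2 \<le> \<bar>a - b\<bar>"
proof -
  have "(sqrt a - sqrt b)\<^sup>2 = \<bar>sqrt a - sqrt b\<bar> * \<bar>sqrt a - sqrt b\<bar>"
    by (simp only: power2_eq_square abs_mult_self_eq)
  also have "\<dots> \<le> \<bar>sqrt a - sqrt b\<bar> * (sqrt a + sqrt b)"
    using assms by (intro mult_left_mono) (auto simp: abs_le_iff)
  also have "\<dots> = \<bar>(sqrt a - sqrt b) * (sqrt a + sqrt b)\<bar>"
    using assms by (simp add: abs_mult)
  also have "(sqrt a - sqrt b) * (sqrt a + sqrt b) = a - b"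
    using assms by (simp add: algebra_simps)
  finally show ?thesis .
qed

section \<open>The classical bound\<close>

lemma prob_vector_depolarize:
  assumes s: "prob_vector d s" and \<delta>: "0 \<le> \<delta>" "\<delta> \<le> 1"
  shows "prob_vector d (\<lambda>j. (1 - \<delta>) * s j + \<delta> / real d)"
    and "\<And>j. j < d \<Longrightarrow> \<delta> / real d \<le> (1 - \<delta>) * s j + \<delta> / real d"
proof -
  show "\<delta> / real d \<le> (1 - \<delta>) * s j + \<delta> / real d" if "j < d" for j
    using s \<delta> that by (simp add: prob_vector_def)
  moreover have "0 \<le> \<delta> / real d"
    using \<delta> by simp
  moreover have "(\<Sum>j<d. (1 - \<delta>) * s j + \<delta> / real d) = (1 - \<delta>) * (\<Sum>j<d. s j) + real d * (\<delta> / real d)"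
    by (simp add: sum.distrib sum_distrib_left)
  ultimately show "prob_vector d (\<lambda>j. (1 - \<delta>) * s j + \<delta> / real d)"
    using s prob_vector_dim_pos[OF s] unfolding prob_vector_def by force
qed

lemma sqrt_dist_depolarize_le:
  assumes s: "prob_vector d s" and \<delta>: "0 \<le> \<delta>" "\<delta> \<le> 1"
  shows "(\<Sum>j<d. (sqrt (s j) - sqrt ((1 - \<delta>) * s j + \<delta> / real d))\<^sup>2) \<le> 2 * \<delta>"
proof -
  let ?q = "\<lambda>j. (1 - \<delta>) * s j + \<delta> / real d"
  have "(\<Sum>j<d. (sqrt (s j) - sqrt (?q j))\<^sup>2) \<le> (\<Sum>j<d. \<bar>s j - ?q j\<bar>)"
    using s prob_vector_depolarize(1)[OF s \<delta>]
    by (intro sum_mono sqrt_diff_sq_le_abs_diff) (auto simp: prob_vector_def)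
  also have "\<dots> \<le> (\<Sum>j<d. \<delta> * s j + \<delta> / real d)"
  proof (rule sum_mono)
    fix j assume "j \<in> {..<d}"
    then have "0 \<le> \<delta> * s j" "0 \<le> \<delta> / real d"
      using s \<delta> by (simp_all add: prob_vector_def)
    moreover have "s j - ?q j = \<delta> * s j - \<delta> / real d"
      by (simp add: algebra_simps)
    ultimately show "\<bar>s j - ?q j\<bar> \<le> \<delta> * s j + \<delta> / real d"
      by (simp only: abs_le_iff) linarith
  qed
  also have "\<dots> = 2 * \<delta>"
    using s prob_vector_dim_pos[OF s] by (simp add: prob_vector_def sum.distrib flip: sum_distrib_left)
  finally show ?thesis .
qed

lemma weighted_sq_dist_triangle:
  fixes x y z :: "nat \<Rightarrow> real"
  assumes w: "doubly_stochastic d w"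
  shows "(\<Sum>i<d. \<Sum>j<d. w i j * (x i - z j)\<^sup>2) \<le>
    2 * (\<Sum>i<d. \<Sum>j<d. w i j * (x i - y j)\<^sup>2) + 2 * (\<Sum>j<d. (y j - z j)\<^sup>2)"
proof -
  have "(\<Sum>i<d. \<Sum>j<d. w i j * (x i - z j)\<^sup>2) \<le>
      (\<Sum>i<d. \<Sum>j<d. w i j * (2 * (x i - y j)\<^sup>2 + 2 * (y j - z j)\<^sup>2))"
  proof (intro sum_mono mult_left_mono)
    fix i j
    have "2 * (x i - y j)\<^sup>2 + 2 * (y j - z j)\<^sup>2 - (x i - z j)\<^sup>2 = (x i - 2 * y j + z j)\<^sup>2"
      by (simp add: power2_eq_square algebra_simps)
    then show "(x i - z j)\<^sup>2 \<le> 2 * (x i - y j)\<^sup>2 + 2 * (y j - z j)\<^sup>2"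
      by (metis diff_ge_0_iff_ge zero_le_power2)
  next
    fix i j assume "i \<in> {..<d}" "j \<in> {..<d}"
    then show "0 \<le> w i j"
      using w by (simp add: doubly_stochastic_def)
  qed
  also have "\<dots> = 2 * (\<Sum>i<d. \<Sum>j<d. w i j * (x i - y j)\<^sup>2) + 2 * (\<Sum>i<d. \<Sum>j<d. w i j * (y j - z j)\<^sup>2)"
    by (simp add: algebra_simps sum.distrib sum_distrib_left)
  also have "(\<Sum>i<d. \<Sum>j<d. w i j * (y j - z j)\<^sup>2) = (\<Sum>j<d. (y j - z j)\<^sup>2)"
    by (rule doubly_stochastic_sum_cols[OF w])
  finally show ?thesis .
qed

lemma prob_vector_le_depolarize:
  assumes p: "prob_vector d p" and s: "prob_vector d s" and \<delta>: "0 < \<delta>" "\<delta> \<le> 1"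
    and i: "i < d" and j: "j < d"
  shows "p i \<le> real d / \<delta> * ((1 - \<delta>) * s j + \<delta> / real d)"
proof -
  have "p i \<le> (\<Sum>i<d. p i)"
    using p i by (intro member_le_sum) (auto simp: prob_vector_def)
  also have "\<dots> = real d / \<delta> * (\<delta> / real d)"
    using p \<delta> i by (simp add: prob_vector_def)
  also have "\<dots> \<le> real d / \<delta> * ((1 - \<delta>) * s j + \<delta> / real d)"
    using prob_vector_depolarize(2)[OF s _ \<delta>(2) j] \<delta> by (intro mult_left_mono) auto
  finally show ?thesis .
qed

lemma weighted_divergence_depolarize_le:
  fixes \<epsilon> :: real
  assumes w: "doubly_stochastic d w" and p: "prob_vector d p" and s: "prob_vector d s"
    and \<epsilon>: "0 < \<epsilon>" "\<epsilon> \<le> 2"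
    and H: "(\<Sum>i<d. \<Sum>j<d. w i j * (sqrt (p i) - sqrt (s j))\<^sup>2) \<le> \<epsilon>"
  defines "q \<equiv> \<lambda>j. (1 - \<epsilon> / 2) * s j + \<epsilon> / 2 / real d"
  shows "(\<Sum>i<d. \<Sum>j<d. w i j * (p i * (ln (p i) - ln (q j)))) \<le> 4 * \<epsilon> * (2 + ln (2 * real d / \<epsilon>))"
proof -
  define M where "M = real d / (\<epsilon> / 2)"
  have d: "0 < real d"
    using prob_vector_dim_pos[OF p] by simp
  have M: "1 \<le> M"
    using d \<epsilon> by (simp add: M_def field_simps)
  have q: "prob_vector d q"
    using prob_vector_depolarize(1)[OF s, of "\<epsilon> / 2"] \<epsilon> by (simp add: q_def)
  have q_pos: "0 < q j" if "j < d" for j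
  proof -
    have "\<epsilon> / 2 / real d \<le> q j"
      using prob_vector_depolarize(2)[OF s _ _ that, of "\<epsilon> / 2"] \<epsilon> by (simp add: q_def)
    moreover have "0 < \<epsilon> / 2 / real d"
      using \<epsilon> d by simp
    ultimately show ?thesis
      by linarith
  qed
  have p_le: "p i \<le> M * q j" if "i < d" "j < d" for i j
    unfolding M_def q_def using \<epsilon> by (intro prob_vector_le_depolarize[OF p s _ _ that]) auto
  have w0: "0 \<le> w i j" if "i < d" "j < d" for i j
    using w that by (simp add: doubly_stochastic_def)
  have dist: "(\<Sum>i<d. \<Sum>j<d. w i j * (sqrt (p i) - sqrt (q j))\<^sup>2) \<le> 4 * \<epsilon>"
    using weighted_sq_dist_triangle[OF w, where x = "\<lambda>i. sqrt (p i)" and y = "\<lambda>j. sqrt (s j)"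
        and z = "\<lambda>j. sqrt (q j)"]
      sqrt_dist_depolarize_le[OF s, of "\<epsilon> / 2"] H \<epsilon> by (simp add: q_def)
  have "(\<Sum>i<d. \<Sum>j<d. w i j * (p i * (ln (p i) - ln (q j)))) \<le>
      (\<Sum>i<d. \<Sum>j<d. w i j * ((p i - q j) + (2 + ln M) * (sqrt (p i) - sqrt (q j))\<^sup>2))"
    using p by (intro sum_mono mult_left_mono entropy_term_le) (auto simp: prob_vector_def q_pos p_le M w0)
  also have "\<dots> = (\<Sum>i<d. p i) - (\<Sum>j<d. q j) +
      (2 + ln M) * (\<Sum>i<d. \<Sum>j<d. w i j * (sqrt (p i) - sqrt (q j))\<^sup>2)"
    using doubly_stochastic_sum_rows[OF w] doubly_stochastic_sum_cols[OF w]
    by (simp add: algebra_simps sum.distrib sum_subtractf sum_distrib_left)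
  also have "\<dots> \<le> (2 + ln M) * (4 * \<epsilon>)"
    using p q M dist by (simp add: prob_vector_def mult_left_mono)
  also have "M = 2 * real d / \<epsilon>"
    by (simp add: M_def)
  finally show ?thesis
    by (simp add: mult.commute)
qed

theorem proposition2p35:
  fixes d :: nat and \<rho> \<sigma> :: "complex mat" and \<epsilon> :: real
  assumes "quantum_state d \<rho>" and "quantum_state d \<sigma>"
    and "0 < \<epsilon>" and "\<epsilon> \<le> 2"
    and "hellinger_sq d \<rho> \<sigma> \<le> \<epsilon>"
  shows "rel_entropy d \<rho> (depolarize d (\<epsilon> / 2) \<sigma>)
           \<le> 4 * \<epsilon> * (2 + ln (2 * real d / \<epsilon>))"
proof -
  obtain U p where U: "unitary_mat d U" and \<rho>: "\<rho> = U * rdiag d p * cadj U" and p: "prob_vector d p"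
    using quantum_state_spectral[OF assms(1)] .
  obtain V s where V: "unitary_mat d V" and \<sigma>: "\<sigma> = V * rdiag d s * cadj V" and s: "prob_vector d s"
    using quantum_state_spectral[OF assms(2)] .
  have "rel_entropy d \<rho> (depolarize d (\<epsilon> / 2) \<sigma>) = (\<Sum>i<d. \<Sum>j<d. basis_overlap U V i j *
      (p i * (ln (p i) - ln ((1 - \<epsilon> / 2) * s j + \<epsilon> / 2 / real d))))"
    unfolding \<rho> \<sigma> depolarize_udiag[OF V] by (rule rel_entropy_udiag[OF U V])
  also have "\<dots> \<le> 4 * \<epsilon> * (2 + ln (2 * real d / \<epsilon>))"
    using assms(3-5) hellinger_sq_udiag[OF U V, of p s]
    by (intro weighted_divergence_depolarize_le[OF doubly_stochastic_basis_overlap[OF U V] p s])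
      (simp_all add: \<rho> \<sigma>)
  finally show ?thesis .
qed

end
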